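(* Let $\{f_i\}_{i\in I}$ be a Parseval frame for a Hilbert space $\mathbb H$. Then for every subset $J\subset I$ and every $f\in\mathbb H$, $$\sum_{i\in J}|\langle f,f_i\rangle|^2-\Big\|\sum_{i\in J}\langle f,f_i\rangle f_i\Big\|^2=\sum_{i\in J^c}|\langle f,f_i\rangle|^2-\Big\|\sum_{i\in J^c}\langle f,f_i\rangle f_i\Big\|^2,$$ where $J^c=I\setminus J$.
   Context: A family $\{f_i\}_{i\in I}$ in a Hilbert space $\mathbb H$ is a Parseval frame if $\sum_{i\in I}|\langle f,f_i\rangle|^2=\|f\|^2$ for all $f\in\mathbb H$. *)

theory Defs
  imports "HOL-Analysis.Analysis"
begin

text \<open>Complex Hilbert spaces: the distribution only provides real inner product
spaces, so we introduce a class of complex inner product spaces that are complete.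
The inner product is linear in the first argument and conjugate linear in the second.\<close>

class complex_hilbert = real_normed_vector + complete_space +
  fixes scaleC :: "complex \<Rightarrow> 'a \<Rightarrow> 'a"
    and cinner :: "'a \<Rightarrow> 'a \<Rightarrow> complex"
  assumes scaleC_add_right: "scaleC a (x + y) = scaleC a x + scaleC a y"
    and scaleC_add_left: "scaleC (a + b) x = scaleC a x + scaleC b x"
    and scaleC_scaleC: "scaleC a (scaleC b x) = scaleC (a * b) x"
    and scaleC_one: "scaleC 1 x = x"
    and scaleR_scaleC: "scaleR r x = scaleC (complex_of_real r) x"
    and cinner_commute: "cinner x y = cnj (cinner y x)"
    and cinner_add_left: "cinner (x + y) z = cinner x z + cinner y z"
    and cinner_scaleC_left: "cinner (scaleC a x) y = a * cinner x y"
    and cinner_self_real: "Im (cinner x x) = 0"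
    and cinner_self_nonneg: "0 \<le> Re (cinner x x)"
    and cinner_self_eq_zero: "cinner x x = 0 \<longleftrightarrow> x = 0"
    and norm_eq_sqrt_cinner: "norm x = sqrt (Re (cinner x x))"

definition parseval_frame :: "'i set \<Rightarrow> ('i \<Rightarrow> 'a::complex_hilbert) \<Rightarrow> bool" where
  "parseval_frame I F \<longleftrightarrow>
     (\<forall>f::'a. ((\<lambda>i. (cmod (cinner f (F i)))^2) has_sum (norm f)^2) I)"

end

theory Submission
  imports Defs
begin

text \<open>Write \<open>A\<close> and \<open>B\<close> for the partial synthesis sums of the analysis coefficients of
  \<open>f\<close> over \<open>J\<close> and over \<open>I - J\<close>. Since \<open>\<langle>A, f\<rangle> = \<Sum>\<^sub>J |\<langle>f, f\<^sub>i\<rangle>|\<^sup>2\<close> and \<open>A + B = f\<close>,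
  the left-hand side is \<open>Re \<langle>A, f - A\<rangle> = Re \<langle>A, B\<rangle>\<close>, and symmetrically the right-hand side
  is \<open>Re \<langle>B, A\<rangle>\<close>. The reconstruction formula \<open>A + B = f\<close> holds because the synthesis
  operator of a Parseval frame is a contraction: \<open>g = \<Sum>\<^sub>I \<langle>f, f\<^sub>i\<rangle> f\<^sub>i\<close> satisfies
  \<open>\<langle>g, f\<rangle> = \<parallel>f\<parallel>\<^sup>2\<close> and \<open>\<parallel>g\<parallel> \<le> \<parallel>f\<parallel>\<close>, so \<open>\<parallel>g - f\<parallel>\<^sup>2 = \<parallel>g\<parallel>\<^sup>2 - \<parallel>f\<parallel>\<^sup>2 \<le> 0\<close>.\<close>

subclass (in complex_hilbert) banach ..

lemma cinner_zero_left [simp]: "cinner 0 y = 0"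
  using cinner_add_left[of 0 0 y] by simp

lemma cinner_zero_right [simp]: "cinner x 0 = 0"
  using cinner_commute[of x 0] by simp

lemma cinner_add_right: "cinner x (y + z) = cinner x y + cinner x z"
  using cinner_add_left[of y z x] by (metis cinner_commute complex_cnj_add)

lemma cinner_scaleC_right: "cinner x (scaleC a y) = cnj a * cinner x y"
  using cinner_scaleC_left[of a y x] by (metis cinner_commute complex_cnj_mult)

lemma cinner_diff_left: "cinner (x - y) z = cinner x z - cinner y z"
  using cinner_add_left[of "x - y" y z] by simp

lemma cinner_diff_right: "cinner x (y - z) = cinner x y - cinner x z"
  using cinner_add_right[of x "y - z" z] by simp

lemma cinner_sum_left: "cinner (\<Sum>i\<in>K. g i) y = (\<Sum>i\<in>K. cinner (g i) y)"
  by (induction K rule: infinite_finite_induct) (auto simp: cinner_add_left)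

lemma cinner_self: "cinner x x = complex_of_real ((norm x)\<^sup>2)"
  using cinner_self_real[of x] cinner_self_nonneg[of x] norm_eq_sqrt_cinner[of x]
  by (simp add: complex_eq_iff)

lemma cinner_Cauchy_Schwarz: "cmod (cinner x y) \<le> norm x * norm y"
proof (cases "y = 0")
  case False
  define a where "a = cinner x y"
  define r where "r = (norm y)\<^sup>2"
  have "r > 0" using False by (simp add: r_def)
  define c where "c = a / of_real r"
  have "cinner (x - scaleC c y) (x - scaleC c y)
      = cinner x x - cnj c * a - c * cnj a + c * cnj c * of_real r"
    by (simp add: cinner_diff_left cinner_diff_right cinner_scaleC_left cinner_scaleC_right
        cinner_commute[of y x] a_def r_def cinner_self[of y] algebra_simps)
  also have "\<dots> = of_real ((norm x)\<^sup>2 - (cmod a)\<^sup>2 / r)"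
    using \<open>r > 0\<close> complex_norm_square[of a]
    by (simp add: c_def cinner_self field_simps)
  finally have "0 \<le> (norm x)\<^sup>2 - (cmod a)\<^sup>2 / r"
    using cinner_self_nonneg[of "x - scaleC c y"] by simp
  then have "(cmod a)\<^sup>2 \<le> (norm x * norm y)\<^sup>2"
    using \<open>r > 0\<close> by (simp add: r_def field_simps power_mult_distrib)
  then show ?thesis
    unfolding a_def by (rule power2_le_imp_le) simp
qed simp

lemma bounded_linear_cinner_left: "bounded_linear (\<lambda>x. cinner x y)"
proof (rule bounded_linear_intro[where K = "norm y"])
  show "cinner (r *\<^sub>R x) y = r *\<^sub>R cinner x y" for r x
    by (simp add: scaleR_scaleC cinner_scaleC_left scaleR_conv_of_real)
qed (simp_all add: cinner_add_left cinner_Cauchy_Schwarz)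

lemma Re_cinner_add_minus_norm_sym:
  "Re (cinner x (x + y)) - (norm x)\<^sup>2 = Re (cinner y (x + y)) - (norm y)\<^sup>2"
proof -
  have "Re (cinner x (x + y)) - (norm x)\<^sup>2 = Re (cinner x y)"
    by (simp add: cinner_add_right cinner_self)
  also have "\<dots> = Re (cinner y x)"
    by (subst cinner_commute) simp
  also have "\<dots> = Re (cinner y (x + y)) - (norm y)\<^sup>2"
    by (simp add: cinner_add_right cinner_self)
  finally show ?thesis .
qed

lemma summable_on_CauchyI:
  fixes f :: "'i \<Rightarrow> 'b::banach"
  assumes small_tails: "\<And>e. e > 0 \<Longrightarrow> \<exists>F0. finite F0 \<and> F0 \<subseteq> A \<and>
      (\<forall>G. finite G \<and> G \<subseteq> A - F0 \<longrightarrow> norm (sum f G) < e)"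
  shows "f summable_on A"
proof -
  have "\<exists>P. eventually P (finite_subsets_at_top A) \<and>
      (\<forall>F1 F2. P F1 \<and> P F2 \<longrightarrow> dist (sum f F1) (sum f F2) < e)" if "e > 0" for e
  proof -
    obtain F0 where F0: "finite F0" "F0 \<subseteq> A"
      and tail: "\<And>G. finite G \<Longrightarrow> G \<subseteq> A - F0 \<Longrightarrow> norm (sum f G) < e / 2"
      using small_tails[of "e / 2"] \<open>e > 0\<close> by auto
    define P where "P F \<longleftrightarrow> finite F \<and> F0 \<subseteq> F \<and> F \<subseteq> A" for F
    have "eventually P (finite_subsets_at_top A)"
      unfolding eventually_finite_subsets_at_top P_def using F0 by auto
    moreover have "dist (sum f F1) (sum f F2) < e" if "P F1" "P F2" for F1 F2
    proof -
      have "sum f F1 = sum f (F1 - F2) + sum f (F1 \<inter> F2)"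
        using that unfolding P_def by (simp add: sum.Int_Diff[of F1 f F2] add.commute)
      moreover have "sum f F2 = sum f (F2 - F1) + sum f (F1 \<inter> F2)"
        using that unfolding P_def by (simp add: sum.Int_Diff[of F2 f F1] add.commute inf_commute)
      ultimately have "sum f F1 - sum f F2 = sum f (F1 - F2) - sum f (F2 - F1)"
        by simp
      then have "dist (sum f F1) (sum f F2) \<le> norm (sum f (F1 - F2)) + norm (sum f (F2 - F1))"
        by (simp add: dist_norm norm_triangle_ineq4)
      also have "\<dots> < e / 2 + e / 2"
        using that unfolding P_def by (intro add_strict_mono tail) auto
      finally show ?thesis by simp
    qed
    ultimately show ?thesis by blast
  qed
  then have "cauchy_filter (filtermap (sum f) (finite_subsets_at_top A))"
    by (simp add: cauchy_filter_metric_filtermap)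
  then obtain L where "filtermap (sum f) (finite_subsets_at_top A) \<le> nhds L"
    using cauchy_filter_complete_converges[OF _ complete_UNIV]
    by (fastforce simp: finite_subsets_at_top_neq_bot)
  then show ?thesis
    unfolding summable_on_def has_sum_def filterlim_def by blast
qed

lemma has_sum_nonneg_small_tails:
  fixes f :: "'i \<Rightarrow> real"
  assumes "(f has_sum S) A" "\<And>i. i \<in> A \<Longrightarrow> f i \<ge> 0" "e > 0"
  obtains F0 where "finite F0" "F0 \<subseteq> A" "\<And>G. finite G \<Longrightarrow> G \<subseteq> A - F0 \<Longrightarrow> sum f G < e"
proof -
  obtain F0 where F0: "finite F0" "F0 \<subseteq> A" "dist (sum f F0) S \<le> e / 2"
    using has_sum_finite_approximation[OF assms(1), of "e / 2"] \<open>e > 0\<close> by auto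
  have "sum f G < e" if G: "finite G" "G \<subseteq> A - F0" for G
  proof -
    have "sum f G + sum f F0 = sum f (G \<union> F0)"
      using G F0 by (intro sum.union_disjoint[symmetric]) auto
    also have "\<dots> \<le> S"
      using G F0 assms(2) by (intro has_sum_mono_neutral[OF has_sum_finite assms(1)]) auto
    finally show ?thesis
      using F0(3) \<open>e > 0\<close> unfolding dist_real_def by linarith
  qed
  then show ?thesis
    using F0 that by blast
qed

lemma parseval_frameD:
  "parseval_frame I F \<Longrightarrow> ((\<lambda>i. (cmod (cinner f (F i)))\<^sup>2) has_sum (norm f)\<^sup>2) I"
  unfolding parseval_frame_def by blast

lemma parseval_frame_coeff_summable:
  "parseval_frame I F \<Longrightarrow> K \<subseteq> I \<Longrightarrow> (\<lambda>i. (cmod (cinner f (F i)))\<^sup>2) summable_on K"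
  by (rule summable_on_subset_banach[OF has_sum_imp_summable[OF parseval_frameD]])

lemma parseval_frame_sum_le:
  assumes "parseval_frame I F" "finite K" "K \<subseteq> I"
  shows "(\<Sum>i\<in>K. (cmod (cinner f (F i)))\<^sup>2) \<le> (norm f)\<^sup>2"
  using assms by (intro has_sum_mono_neutral[OF has_sum_finite parseval_frameD]) auto

lemma parseval_frame_synthesis_norm_le:
  assumes "parseval_frame I F" "finite K" "K \<subseteq> I"
  shows "(norm (\<Sum>i\<in>K. scaleC (d i) (F i)))\<^sup>2 \<le> (\<Sum>i\<in>K. (cmod (d i))\<^sup>2)"
proof -
  define g where "g = (\<Sum>i\<in>K. scaleC (d i) (F i))"
  define D where "D = (\<Sum>i\<in>K. (cmod (d i))\<^sup>2)"
  have "(norm g)\<^sup>2 = Re (cinner g g)"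
    by (simp add: cinner_self)
  also have "cinner g g = (\<Sum>i\<in>K. d i * cinner (F i) g)"
    unfolding g_def by (simp add: cinner_sum_left cinner_scaleC_left)
  also have "Re \<dots> \<le> cmod \<dots>"
    by (rule complex_Re_le_cmod)
  also have "\<dots> \<le> (\<Sum>i\<in>K. cmod (d i) * cmod (cinner g (F i)))"
    by (rule order.trans[OF norm_sum]) (simp add: norm_mult cinner_commute[of "F _" g])
  finally have "((norm g)\<^sup>2)\<^sup>2 \<le> (\<Sum>i\<in>K. cmod (d i) * cmod (cinner g (F i)))\<^sup>2"
    by (rule power_mono) simp
  also have "\<dots> \<le> D * (\<Sum>i\<in>K. (cmod (cinner g (F i)))\<^sup>2)"
    unfolding D_def by (rule Cauchy_Schwarz_ineq_sum)
  also have "\<dots> \<le> D * (norm g)\<^sup>2"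
    using parseval_frame_sum_le[OF assms] by (simp add: D_def mult_left_mono sum_nonneg)
  finally have "(norm g)\<^sup>2 * (norm g)\<^sup>2 \<le> D * (norm g)\<^sup>2"
    by (simp add: power2_eq_square)
  then have "(norm g)\<^sup>2 \<le> D" if "g \<noteq> 0"
    by (rule mult_right_le_imp_le) (use that in simp)
  then show ?thesis
    unfolding g_def[symmetric] D_def[symmetric]
    by (cases "g = 0") (simp_all add: D_def sum_nonneg)
qed

lemma parseval_frame_synthesis_summable:
  assumes "parseval_frame I F" "K \<subseteq> I" "(\<lambda>i. (cmod (d i))\<^sup>2) summable_on K"
  shows "(\<lambda>i. scaleC (d i) (F i)) summable_on K"
proof (rule summable_on_CauchyI)
  fix e :: real
  assume "e > 0"
  then obtain F0 where F0: "finite F0" "F0 \<subseteq> K"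
    and tail: "\<And>G. finite G \<Longrightarrow> G \<subseteq> K - F0 \<Longrightarrow> (\<Sum>i\<in>G. (cmod (d i))\<^sup>2) < e\<^sup>2"
    using has_sum_nonneg_small_tails[OF has_sum_infsum[OF assms(3)], of "e\<^sup>2"] by auto
  have "norm (\<Sum>i\<in>G. scaleC (d i) (F i)) < e" if "finite G" "G \<subseteq> K - F0" for G
  proof -
    have "(norm (\<Sum>i\<in>G. scaleC (d i) (F i)))\<^sup>2 < e\<^sup>2"
      using parseval_frame_synthesis_norm_le[OF assms(1) \<open>finite G\<close>, of d] tail[OF that] that assms(2)
      by fastforce
    then show ?thesis
      using \<open>e > 0\<close> by (simp add: power2_less_imp_less)
  qed
  then show "\<exists>F0. finite F0 \<and> F0 \<subseteq> K \<and>
      (\<forall>G. finite G \<and> G \<subseteq> K - F0 \<longrightarrow> norm (\<Sum>i\<in>G. scaleC (d i) (F i)) < e)"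
    using F0 by blast
qed

lemma parseval_frame_synthesis_infsum_norm_le:
  assumes "parseval_frame I F" "K \<subseteq> I" "(\<lambda>i. (cmod (d i))\<^sup>2) summable_on K"
  shows "(norm (\<Sum>\<^sub>\<infinity>i\<in>K. scaleC (d i) (F i)))\<^sup>2 \<le> (\<Sum>\<^sub>\<infinity>i\<in>K. (cmod (d i))\<^sup>2)"
proof (rule tendsto_le[OF finite_subsets_at_top_neq_bot])
  show "((\<lambda>G. \<Sum>i\<in>G. (cmod (d i))\<^sup>2) \<longlongrightarrow> (\<Sum>\<^sub>\<infinity>i\<in>K. (cmod (d i))\<^sup>2)) (finite_subsets_at_top K)"
    using has_sum_infsum[OF assms(3)] unfolding has_sum_def .
  show "((\<lambda>G. (norm (\<Sum>i\<in>G. scaleC (d i) (F i)))\<^sup>2)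
      \<longlongrightarrow> (norm (\<Sum>\<^sub>\<infinity>i\<in>K. scaleC (d i) (F i)))\<^sup>2) (finite_subsets_at_top K)"
    using has_sum_infsum[OF parseval_frame_synthesis_summable[OF assms]]
    unfolding has_sum_def by (intro tendsto_intros)
  show "\<forall>\<^sub>F G in finite_subsets_at_top K.
      (norm (\<Sum>i\<in>G. scaleC (d i) (F i)))\<^sup>2 \<le> (\<Sum>i\<in>G. (cmod (d i))\<^sup>2)"
    using assms(2)
    by (intro eventually_finite_subsets_at_top_weakI parseval_frame_synthesis_norm_le[OF assms(1)]) auto
qed

lemma parseval_frame_analysis_synthesis_summable:
  "parseval_frame I F \<Longrightarrow> K \<subseteq> I \<Longrightarrow> (\<lambda>i. scaleC (cinner f (F i)) (F i)) summable_on K"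
  by (rule parseval_frame_synthesis_summable[OF _ _ parseval_frame_coeff_summable])

lemma cinner_parseval_frame_synthesis:
  assumes "parseval_frame I F" "K \<subseteq> I"
  shows "cinner (\<Sum>\<^sub>\<infinity>i\<in>K. scaleC (cinner f (F i)) (F i)) f
    = complex_of_real (\<Sum>\<^sub>\<infinity>i\<in>K. (cmod (cinner f (F i)))\<^sup>2)"
proof (rule has_sum_unique)
  note coeff_summable = parseval_frame_coeff_summable[OF assms, of f]
  have coeff_term: "cinner (scaleC (cinner f (F i)) (F i)) f = complex_of_real ((cmod (cinner f (F i)))\<^sup>2)" for i
    using complex_norm_square[of "cinner f (F i)"] cinner_commute[of "F i" f]
    by (simp add: cinner_scaleC_left)
  show "((\<lambda>i. complex_of_real ((cmod (cinner f (F i)))\<^sup>2)) has_sum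
      cinner (\<Sum>\<^sub>\<infinity>i\<in>K. scaleC (cinner f (F i)) (F i)) f) K"
    using has_sum_bounded_linear[OF bounded_linear_cinner_left[of f]
        has_sum_infsum[OF parseval_frame_analysis_synthesis_summable[OF assms, of f]]]
    by (simp only: coeff_term)
  show "((\<lambda>i. complex_of_real ((cmod (cinner f (F i)))\<^sup>2)) has_sum
      complex_of_real (\<Sum>\<^sub>\<infinity>i\<in>K. (cmod (cinner f (F i)))\<^sup>2)) K"
    by (rule has_sum_bounded_linear[OF bounded_linear_of_real has_sum_infsum[OF coeff_summable]])
qed

lemma parseval_frame_reconstruction:
  assumes "parseval_frame I F"
  shows "(\<Sum>\<^sub>\<infinity>i\<in>I. scaleC (cinner f (F i)) (F i)) = f"
proof -
  define g where "g = (\<Sum>\<^sub>\<infinity>i\<in>I. scaleC (cinner f (F i)) (F i))"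
  have coeff_infsum: "(\<Sum>\<^sub>\<infinity>i\<in>I. (cmod (cinner f (F i)))\<^sup>2) = (norm f)\<^sup>2"
    using parseval_frameD[OF assms] by (rule infsumI)
  have gf: "cinner g f = complex_of_real ((norm f)\<^sup>2)"
    using cinner_parseval_frame_synthesis[OF assms order.refl] by (simp add: g_def coeff_infsum)
  have g_le_f: "(norm g)\<^sup>2 \<le> (norm f)\<^sup>2"
    using parseval_frame_synthesis_infsum_norm_le[OF assms order.refl
        parseval_frame_coeff_summable[OF assms order.refl, of f]]
    by (simp add: g_def coeff_infsum)
  have "(norm (g - f))\<^sup>2 = Re (cinner (g - f) (g - f))"
    by (simp add: cinner_self)
  also have "cinner (g - f) (g - f) = cinner g g - cinner g f - cinner f g + cinner f f"
    by (simp add: cinner_diff_left cinner_diff_right)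
  also have "Re \<dots> = (norm g)\<^sup>2 - (norm f)\<^sup>2"
    using gf cinner_commute[of f g] by (simp add: cinner_self)
  finally have "(norm (g - f))\<^sup>2 \<le> 0"
    using g_le_f by linarith
  then show ?thesis
    by (simp add: g_def)
qed

lemma parseval_frame_reconstruction_split:
  assumes "parseval_frame I F" "J \<subseteq> I"
  shows "(\<Sum>\<^sub>\<infinity>i\<in>J. scaleC (cinner f (F i)) (F i))
       + (\<Sum>\<^sub>\<infinity>i\<in>I - J. scaleC (cinner f (F i)) (F i)) = f"
proof -
  have "((\<lambda>i. scaleC (cinner f (F i)) (F i)) has_sum
      (\<Sum>\<^sub>\<infinity>i\<in>J. scaleC (cinner f (F i)) (F i))
      + (\<Sum>\<^sub>\<infinity>i\<in>I - J. scaleC (cinner f (F i)) (F i))) (J \<union> (I - J))"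
    using assms by (intro has_sum_Un_disjoint has_sum_infsum parseval_frame_analysis_synthesis_summable) auto
  moreover have "J \<union> (I - J) = I"
    using assms(2) by blast
  ultimately show ?thesis
    by (metis infsumI parseval_frame_reconstruction[OF assms(1)])
qed

theorem theorem3p2:
  fixes I :: "'i set" and F :: "'i \<Rightarrow> 'a::complex_hilbert"
    and J :: "'i set" and f :: 'a
  assumes "parseval_frame I F"
    and "J \<subseteq> I"
  shows "(\<Sum>\<^sub>\<infinity>i\<in>J. (cmod (cinner f (F i)))^2)
           - (norm (\<Sum>\<^sub>\<infinity>i\<in>J. scaleC (cinner f (F i)) (F i)))^2
       = (\<Sum>\<^sub>\<infinity>i\<in>I - J. (cmod (cinner f (F i)))^2)
           - (norm (\<Sum>\<^sub>\<infinity>i\<in>I - J. scaleC (cinner f (F i)) (F i)))^2"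
proof -
  let ?A = "\<Sum>\<^sub>\<infinity>i\<in>J. scaleC (cinner f (F i)) (F i)"
  let ?B = "\<Sum>\<^sub>\<infinity>i\<in>I - J. scaleC (cinner f (F i)) (F i)"
  have "?A + ?B = f"
    by (rule parseval_frame_reconstruction_split[OF assms])
  moreover have "cinner ?A f = complex_of_real (\<Sum>\<^sub>\<infinity>i\<in>J. (cmod (cinner f (F i)))\<^sup>2)"
    by (rule cinner_parseval_frame_synthesis[OF assms])
  moreover have "cinner ?B f = complex_of_real (\<Sum>\<^sub>\<infinity>i\<in>I - J. (cmod (cinner f (F i)))\<^sup>2)"
    using assms(1) by (rule cinner_parseval_frame_synthesis) blast
  ultimately show ?thesis
    using Re_cinner_add_minus_norm_sym[of ?A ?B] by simp
qed

end
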